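(* If a finite simple graph $H$ has no odd cycle of length greater than $3$, then $H$ is a weak König–Egerváry graph.
   Context: A graph $H$ is a weak König–Egerváry graph if $H$ has a matching $M$ and a vertex set $Q \subseteq V(H)$ with $|Q| \leq |M|$ such that $Q$ is a vertex cover of $H - M$ (every edge of $H$ not in $M$ has an endpoint in $Q$). *)

theory Defs
  imports Main
begin

definition simple_graph :: "'a set \<Rightarrow> 'a set set \<Rightarrow> bool" where
  "simple_graph V E \<longleftrightarrow> finite V \<and>
     (\<forall>e\<in>E. \<exists>u v. e = {u, v} \<and> u \<noteq> v \<and> u \<in> V \<and> v \<in> V)"

definition matching :: "'a set set \<Rightarrow> 'a set set \<Rightarrow> bool" where
  "matching E M \<longleftrightarrow> M \<subseteq> E \<and> (\<forall>e\<in>M. \<forall>f\<in>M. e \<noteq> f \<longrightarrow> e \<inter> f = {})"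

definition covers :: "'a set \<Rightarrow> 'a set set \<Rightarrow> bool" where
  "covers Q F \<longleftrightarrow> (\<forall>e\<in>F. e \<inter> Q \<noteq> {})"

definition weak_KE :: "'a set \<Rightarrow> 'a set set \<Rightarrow> bool" where
  "weak_KE V E \<longleftrightarrow> (\<exists>M Q. matching E M \<and> Q \<subseteq> V \<and> card Q \<le> card M \<and> covers Q (E - M))"

definition is_cycle :: "'a set \<Rightarrow> 'a set set \<Rightarrow> 'a list \<Rightarrow> bool" where
  "is_cycle V E vs \<longleftrightarrow> length vs \<ge> 3 \<and> distinct vs \<and> set vs \<subseteq> V \<and>
     (\<forall>i < length vs. {vs ! i, vs ! ((i + 1) mod length vs)} \<in> E)"

end

theory Submission
  imports Defs
begin

text \<open>
  Induction on the number of vertices, for a fixed maximum matching M. If some vertex v is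
  covered by every maximum matching, deleting v lowers the matching number by one, and v together
  with a cover for G - v does the job. Otherwise every vertex is exposed by some maximum matching.
  Then, if x is exposed by M and its neighbour y by another maximum matching, the M-mate of y is
  adjacent to x: an M-alternating path from y to an M-exposed vertex either extends through x to
  an augmenting path or closes an odd cycle through x, which has to be a triangle. Applied along a
  longest path x0 x1 x2 ..., this forces x0 and x1 to have degree two and to span a triangle with
  x2. Deleting x0 and x1 again lowers the matching number by one, and the triangle vertex not on
  the unique matching edge at x0, x1 covers the remaining edges there.
\<close>

definition no_long_odd_cycles :: "'a set \<Rightarrow> 'a set set \<Rightarrow> bool" where
  "no_long_odd_cycles V E \<longleftrightarrow> \<not> (\<exists>vs. is_cycle V E vs \<and> odd (length vs) \<and> length vs > 3)"

definition max_matching :: "'a set set \<Rightarrow> 'a set set \<Rightarrow> bool" where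
  "max_matching E M \<longleftrightarrow> matching E M \<and> (\<forall>M'. matching E M' \<longrightarrow> card M' \<le> card M)"

definition edges_avoiding :: "'a set \<Rightarrow> 'a set set \<Rightarrow> 'a set set" where
  "edges_avoiding S E = {e \<in> E. e \<inter> S = {}}"

fun walk :: "'a set set \<Rightarrow> 'a list \<Rightarrow> bool" where
  "walk E (x # y # p) \<longleftrightarrow> {x, y} \<in> E \<and> walk E (y # p)"
| "walk E _ \<longleftrightarrow> True"

fun pairwise_matched :: "'a set set \<Rightarrow> 'a list \<Rightarrow> bool" where
  "pairwise_matched M (x # y # p) \<longleftrightarrow> {x, y} \<in> M \<and> pairwise_matched M p"
| "pairwise_matched M _ \<longleftrightarrow> True"

lemma walk_Cons: "walk E (x # p) \<longleftrightarrow> walk E p \<and> (p \<noteq> [] \<longrightarrow> {x, hd p} \<in> E)"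
  by (cases p) auto

lemma walk_iff_nth: "walk E p \<longleftrightarrow> (\<forall>i. Suc i < length p \<longrightarrow> {p ! i, p ! Suc i} \<in> E)"
proof (induction E p rule: walk.induct)
  case (1 E x y p)
  then show ?case by (auto simp: less_Suc_eq_0_disj)
qed auto

lemma walk_drop: "walk E p \<Longrightarrow> walk E (drop n p)"
  by (simp add: walk_iff_nth)

lemma walk_take: "walk E p \<Longrightarrow> walk E (take n p)"
  by (simp add: walk_iff_nth)

lemma simple_graph_edgeD: "simple_graph V E \<Longrightarrow> {a, b} \<in> E \<Longrightarrow> a \<noteq> b \<and> a \<in> V \<and> b \<in> V"
  unfolding simple_graph_def by (fastforce simp: doubleton_eq_iff)

lemma walk_set: "simple_graph V E \<Longrightarrow> walk E p \<Longrightarrow> 2 \<le> length p \<Longrightarrow> set p \<subseteq> V"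
proof (induction E p rule: walk.induct)
  case (1 E x y p)
  then show ?case using simple_graph_edgeD[of V E x y] by (cases p) auto
qed auto

lemma simple_graph_edge_other:
  "simple_graph V E \<Longrightarrow> e \<in> E \<Longrightarrow> x \<in> e \<Longrightarrow> \<exists>y. e = {x, y} \<and> x \<noteq> y"
  unfolding simple_graph_def by auto

lemma simple_graph_finite_edges:
  assumes "simple_graph V E" shows "finite E"
proof -
  have "E \<subseteq> Pow V" "finite V" using assms unfolding simple_graph_def by auto
  then show ?thesis using finite_subset by auto
qed

lemma simple_graph_edges_avoiding:
  assumes "simple_graph V E" shows "simple_graph (V - S) (edges_avoiding S E)"
  unfolding simple_graph_def
proof (intro conjI ballI)
  show "finite (V - S)" using assms unfolding simple_graph_def by simp
next
  fix e assume "e \<in> edges_avoiding S E"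
  then have e: "e \<in> E" "e \<inter> S = {}" unfolding edges_avoiding_def by auto
  then obtain u v where "e = {u, v}" "u \<noteq> v" "u \<in> V" "v \<in> V"
    using assms unfolding simple_graph_def by blast
  then show "\<exists>u v. e = {u, v} \<and> u \<noteq> v \<and> u \<in> V - S \<and> v \<in> V - S"
    using e(2) by blast
qed

lemma is_cycle_mono: "is_cycle V' E' vs \<Longrightarrow> V' \<subseteq> V \<Longrightarrow> E' \<subseteq> E \<Longrightarrow> is_cycle V E vs"
  unfolding is_cycle_def by blast

lemma no_long_odd_cycles_edges_avoiding:
  "no_long_odd_cycles V E \<Longrightarrow> no_long_odd_cycles (V - S) (edges_avoiding S E)"
  unfolding no_long_odd_cycles_def
  using is_cycle_mono[of "V - S" "edges_avoiding S E" _ V E] by (auto simp: edges_avoiding_def)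

lemma closed_walk_is_cycle:
  assumes "distinct q" "set q \<subseteq> V" "walk E q" "3 \<le> length q" "{last q, hd q} \<in> E"
  shows "is_cycle V E q"
  unfolding is_cycle_def
proof (intro conjI allI impI)
  fix i assume i: "i < length q"
  show "{q ! i, q ! ((i + 1) mod length q)} \<in> E"
  proof (cases "Suc i < length q")
    case True
    then show ?thesis using assms(3) by (simp add: walk_iff_nth)
  next
    case False
    then have "Suc i = length q" using i by simp
    moreover have "q \<noteq> []" using assms(4) by auto
    ultimately show ?thesis
      using assms(5) by (simp add: last_conv_nth hd_conv_nth flip: \<open>Suc i = length q\<close>)
  qed
qed (use assms in auto)

lemma odd_closed_walk_length:
  assumes "no_long_odd_cycles V E" "distinct q" "set q \<subseteq> V" "walk E q" "3 \<le> length q"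
    "{last q, hd q} \<in> E" "odd (length q)"
  shows "length q = 3"
  using closed_walk_is_cycle[OF assms(2-6)] assms(1,5,7) unfolding no_long_odd_cycles_def by force

lemma path_chord_parity:
  assumes "no_long_odd_cycles V E" "distinct P" "set P \<subseteq> V" "walk E P"
    "i + 3 \<le> j" "j < length P" "{P ! j, P ! i} \<in> E"
  shows "odd (j - i)"
proof -
  define q where "q = drop i (take (Suc j) P)"
  have len: "length q = Suc j - i" unfolding q_def using assms(6) by simp
  have "hd q = P ! i" unfolding q_def using assms(5,6) by (simp add: hd_drop_conv_nth)
  moreover have "last q = P ! j" unfolding q_def using assms(5,6)
    by (simp add: last_conv_nth)
  moreover have "distinct q" unfolding q_def using assms(2) by simp
  moreover have "set q \<subseteq> V" unfolding q_def using assms(3)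
    by (meson order_trans set_drop_subset set_take_subset)
  moreover have "walk E q" unfolding q_def using assms(4) by (simp add: walk_drop walk_take)
  ultimately have "{last q, hd q} \<in> E" using assms(7) by simp
  have "even (length q)"
  proof (rule ccontr)
    assume "odd (length q)"
    then have "length q = 3"
      using odd_closed_walk_length[OF assms(1) \<open>distinct q\<close> \<open>set q \<subseteq> V\<close> \<open>walk E q\<close> _
          \<open>{last q, hd q} \<in> E\<close>] len assms(5)
      by linarith
    then show False using len assms(5) by linarith
  qed
  then show ?thesis using len assms(5) by simp
qed

lemma pairwise_matched_unmatched_last:
  "pairwise_matched M p \<Longrightarrow> x \<in> set p \<Longrightarrow> x \<notin> \<Union>M \<Longrightarrow> x = last p"
  by (induction M p rule: pairwise_matched.induct) auto

lemma pairwise_matched_mono: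
  "pairwise_matched M p \<Longrightarrow> (\<And>e. e \<in> M \<Longrightarrow> e \<subseteq> set p \<Longrightarrow> e \<in> M') \<Longrightarrow> pairwise_matched M' p"
  by (induction M p rule: pairwise_matched.induct) auto

lemma matching_unique: "matching E M \<Longrightarrow> e \<in> M \<Longrightarrow> f \<in> M \<Longrightarrow> x \<in> e \<Longrightarrow> x \<in> f \<Longrightarrow> e = f"
  unfolding matching_def by blast

lemma matching_mate:
  assumes "simple_graph V E" "matching E M" "x \<in> \<Union>M"
  shows "\<exists>y. {x, y} \<in> M \<and> x \<noteq> y"
proof -
  obtain e where "e \<in> M" "x \<in> e" using assms(3) by blast
  moreover have "e \<in> E" using \<open>e \<in> M\<close> assms(2) unfolding matching_def by auto
  ultimately show ?thesis using simple_graph_edge_other[OF assms(1)] by metis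
qed

lemma matching_finite: "finite E \<Longrightarrow> matching E M \<Longrightarrow> finite M"
  unfolding matching_def using finite_subset by auto

lemma max_matching_exists:
  assumes "finite E" shows "\<exists>M. max_matching E M"
proof -
  have "card M < Suc (card E)" if "matching E M" for M
    using that card_mono[OF assms] unfolding matching_def by fastforce
  moreover have "matching E {}" unfolding matching_def by simp
  ultimately show ?thesis unfolding max_matching_def
    using ex_has_greatest_nat[where P = "matching E" and f = card] by metis
qed

lemma matching_insert:
  "matching E M \<Longrightarrow> {a, b} \<in> E \<Longrightarrow> a \<notin> \<Union>M \<Longrightarrow> b \<notin> \<Union>M \<Longrightarrow> matching E (insert {a, b} M)"
  unfolding matching_def by blast

lemma max_matching_edge_covered:
  assumes "max_matching E M" "finite E" "{a, b} \<in> E" "a \<notin> \<Union>M"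
  shows "b \<in> \<Union>M"
proof (rule ccontr)
  assume "b \<notin> \<Union>M"
  have "matching E M" using assms(1) unfolding max_matching_def by simp
  then have "matching E (insert {a, b} M)" "finite M" "{a, b} \<notin> M"
    using matching_insert[OF _ assms(3,4) \<open>b \<notin> \<Union>M\<close>] matching_finite[OF assms(2)] assms(4) by auto
  then show False using assms(1) unfolding max_matching_def by fastforce
qed

lemma matching_swap:
  assumes "matching E N" "{a, b} \<in> N" "{c, a} \<in> E" "c \<notin> \<Union>N"
  shows "matching E (insert {c, a} (N - {{a, b}}))"
  unfolding matching_def
proof (intro conjI ballI impI)
  have others: "a \<notin> g \<and> c \<notin> g" if "g \<in> N - {{a, b}}" for g
    using that assms(4) matching_unique[OF assms(1) _ assms(2), of g a] by auto
  show "insert {c, a} (N - {{a, b}}) \<subseteq> E" using assms(1,3) unfolding matching_def by auto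
  fix g h assume "g \<in> insert {c, a} (N - {{a, b}})" "h \<in> insert {c, a} (N - {{a, b}})" "g \<noteq> h"
  then consider "g = {c, a}" "h \<in> N - {{a, b}}" | "h = {c, a}" "g \<in> N - {{a, b}}" | "g \<in> N" "h \<in> N"
    by auto
  then show "g \<inter> h = {}"
  proof cases
    case 3
    then show ?thesis using assms(1) \<open>g \<noteq> h\<close> unfolding matching_def by blast
  qed (use others in auto)
qed

lemma card_swap:
  assumes "finite N" "{a, b} \<in> N" "c \<notin> \<Union>N"
  shows "card (insert {c, a} (N - {{a, b}})) = card N"
proof -
  have "{c, a} \<notin> N - {{a, b}}" using assms(3) by blast
  then have "card (insert {c, a} (N - {{a, b}})) = Suc (card (N - {{a, b}}))" using assms(1) by simp
  also have "\<dots> = card N" using card.remove[OF assms(1,2)] by simp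
  finally show ?thesis .
qed

lemma max_matching_swap:
  assumes "max_matching E N" "finite E" "{a, b} \<in> N" "{c, a} \<in> E" "c \<notin> \<Union>N"
  shows "max_matching E (insert {c, a} (N - {{a, b}}))"
  using assms matching_swap card_swap matching_finite unfolding max_matching_def by metis

lemma swap_unmatched:
  assumes "matching E N" "{a, b} \<in> N" "c \<notin> \<Union>N" "a \<noteq> b"
  shows "b \<notin> \<Union>(insert {c, a} (N - {{a, b}}))"
  using assms matching_unique[OF assms(1) _ assms(2), of _ b] by blast

lemma max_matching_no_augmenting_path:
  assumes "max_matching E M" "finite E" "distinct (a # p)" "walk E (a # p)" "odd (length p)"
    "a \<notin> \<Union>M" "last p \<notin> \<Union>M" "pairwise_matched M p"
  shows False
  using assms
proof (induction p arbitrary: a M rule: induct_list012)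
  case (2 b)
  then have "matching E M" "finite M" "{a, b} \<in> E" "b \<notin> \<Union>M" "{a, b} \<notin> M"
    using matching_finite unfolding max_matching_def by auto
  then have "matching E (insert {a, b} M)" "card (insert {a, b} M) = Suc (card M)"
    using matching_insert \<open>a \<notin> \<Union>M\<close> by auto
  then show False using "2.prems"(1) unfolding max_matching_def by fastforce
next
  case (3 b c p)
  \<comment> \<open>Shift the matching edge {b, c} to {a, b}: the matching stays maximum, c becomes
    exposed, and c # p is a shorter augmenting path.\<close>
  have bc: "{b, c} \<in> M" and ab: "{a, b} \<in> E" using "3.prems"(4,8) by auto
  have "p \<noteq> []" using "3.prems"(5) by auto
  define M1 where "M1 = insert {a, b} (M - {{b, c}})"
  have "max_matching E M1"
    unfolding M1_def using max_matching_swap[OF "3.prems"(1,2) bc _ "3.prems"(6)] ab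
    by (simp add: insert_commute)
  moreover have "c \<notin> \<Union>M1"
  proof -
    have "c \<notin> g" if "g \<in> M - {{b, c}}" for g
      using that matching_unique[OF _ that[THEN DiffD1] bc, of E c] "3.prems"(1)
      unfolding max_matching_def by auto
    then show ?thesis using "3.prems"(3) unfolding M1_def by auto
  qed
  moreover have "last p \<notin> \<Union>M1"
    using "3.prems"(3,7) \<open>p \<noteq> []\<close> unfolding M1_def by auto
  moreover have "pairwise_matched M1 p"
    using "3.prems"(3,8) by (auto intro: pairwise_matched_mono simp: M1_def)
  ultimately show False
    using "3.IH"(1)[of M1 c] "3.prems"(2-5) by (auto simp: walk_Cons)
qed simp

lemma alternating_edges_at_exposed:
  assumes simple: "simple_graph V E" and M: "max_matching E M" and N: "max_matching E N"
    and y: "y \<in> \<Union>M" "y \<notin> \<Union>N"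
  shows "\<exists>y' z. {y, y'} \<in> M - N \<and> {y', z} \<in> N - M \<and> y \<noteq> y' \<and> y' \<noteq> z \<and> z \<noteq> y"
proof -
  have mM: "matching E M" and mN: "matching E N" using M N unfolding max_matching_def by auto
  obtain y' where yy': "{y, y'} \<in> M" "y \<noteq> y'" using matching_mate[OF simple mM y(1)] by blast
  have "{y, y'} \<in> E" using yy'(1) mM unfolding matching_def by auto
  then have "y' \<in> \<Union>N"
    using max_matching_edge_covered[OF N simple_graph_finite_edges[OF simple] _ y(2)] by blast
  then obtain z where y'z: "{y', z} \<in> N" "y' \<noteq> z" using matching_mate[OF simple mN] by blast
  have "z \<noteq> y" using y'z(1) y(2) by blast
  moreover have "{y', z} \<notin> M"
    using matching_unique[OF mM _ yy'(1), of "{y', z}" y'] \<open>z \<noteq> y\<close> yy'(2)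
    by (auto simp: doubleton_eq_iff)
  ultimately show ?thesis using yy' y'z y(2) by blast
qed

text \<open>Exchanging the edge {y', z} for {y, y'} keeps N maximum, exposes z and shrinks M - N.\<close>

lemma alternating_swap:
  assumes fin: "finite E" and M: "max_matching E M" and N: "max_matching E N" and y: "y \<notin> \<Union>N"
    and yy': "{y, y'} \<in> M - N" and y'z: "{y', z} \<in> N - M" "y' \<noteq> z"
  obtains N2 where "max_matching E N2" "z \<notin> \<Union>N2" "card (M - N2) < card (M - N)"
    "sym_diff M N2 \<subseteq> sym_diff M N" "y \<notin> \<Union>(sym_diff M N2)" "y' \<notin> \<Union>(sym_diff M N2)"
proof -
  have mM: "matching E M" and mN: "matching E N" using M N unfolding max_matching_def by auto
  have "{y, y'} \<in> E" using yy' mM unfolding matching_def by auto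
  define N2 where "N2 = insert {y, y'} (N - {{y', z}})"
  have N2: "max_matching E N2"
    unfolding N2_def using max_matching_swap[OF N fin _ \<open>{y, y'} \<in> E\<close> y] y'z(1) by blast
  have "z \<notin> \<Union>N2" unfolding N2_def using swap_unmatched[OF mN _ y y'z(2)] y'z(1) by blast
  have sd: "sym_diff M N2 \<subseteq> sym_diff M N" "M - N2 \<subset> M - N"
    using yy' y'z unfolding N2_def by auto
  then have "card (M - N2) < card (M - N)"
    using psubset_card_mono[OF finite_Diff[OF matching_finite[OF fin mM]]] by blast
  have "matching E N2" "{y, y'} \<in> N2" using N2 unfolding N2_def max_matching_def by auto
  then have "g = {y, y'}" if "g \<in> M \<union> N2" "w \<in> g" "w \<in> {y, y'}" for g w
    using that yy' matching_unique[OF mM, of g "{y, y'}" w] matching_unique[of E N2 g "{y, y'}" w]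
    by blast
  then have "y \<notin> \<Union>(sym_diff M N2)" "y' \<notin> \<Union>(sym_diff M N2)"
    using yy' unfolding N2_def by blast+
  then show ?thesis using that N2 \<open>z \<notin> \<Union>N2\<close> sd(1) \<open>card (M - N2) < card (M - N)\<close> by blast
qed

lemma alternating_path_to_exposed:
  assumes simple: "simple_graph V E" and M: "max_matching E M"
  shows "max_matching E N \<Longrightarrow> y \<in> \<Union>M \<Longrightarrow> y \<notin> \<Union>N \<Longrightarrow>
    \<exists>p. p \<noteq> [] \<and> even (length p) \<and> distinct (y # p) \<and> walk E (y # p) \<and> last p \<notin> \<Union>M
      \<and> pairwise_matched M (y # p) \<and> set (y # p) \<subseteq> \<Union>(sym_diff M N)"
proof (induction "card (M - N)" arbitrary: N y rule: less_induct)
  case less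
  have fin: "finite E" using simple_graph_finite_edges[OF simple] .
  obtain y' z where yy': "{y, y'} \<in> M - N" and y'z: "{y', z} \<in> N - M"
    and "y \<noteq> y'" "y' \<noteq> z" "z \<noteq> y"
    using alternating_edges_at_exposed[OF simple M less.prems] by blast
  have edges: "{y, y'} \<in> E" "{y', z} \<in> E"
    using yy' y'z M less.prems(1) unfolding max_matching_def matching_def by auto
  show ?case
  proof (cases "z \<in> \<Union>M")
    case False
    have "{y, y'} \<union> {y', z} \<subseteq> \<Union>(sym_diff M N)" using yy' y'z by (intro Un_least Union_upper) auto
    then have "set [y, y', z] \<subseteq> \<Union>(sym_diff M N)" by (simp add: insert_commute)
    then show ?thesis using False yy' edges \<open>y \<noteq> y'\<close> \<open>y' \<noteq> z\<close> \<open>z \<noteq> y\<close>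
      by (intro exI[of _ "[y', z]"] conjI) simp_all
  next
    case True
    obtain N2 where N2: "max_matching E N2" "z \<notin> \<Union>N2" "card (M - N2) < card (M - N)"
      "sym_diff M N2 \<subseteq> sym_diff M N" "y \<notin> \<Union>(sym_diff M N2)" "y' \<notin> \<Union>(sym_diff M N2)"
      using alternating_swap[OF fin M less.prems(1,3) yy' y'z \<open>y' \<noteq> z\<close>] by blast
    then obtain p where p: "p \<noteq> []" "even (length p)" "distinct (z # p)" "walk E (z # p)"
      "last p \<notin> \<Union>M" "pairwise_matched M (z # p)" "set (z # p) \<subseteq> \<Union>(sym_diff M N2)"
      using less.hyps[OF N2(3,1) True N2(2)] by blast
    have "y \<notin> set (z # p)" "y' \<notin> set (z # p)" using p(7) N2(5,6) by blast+
    moreover have "{y, y'} \<union> set (z # p) \<subseteq> \<Union>(sym_diff M N)"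
      using yy' by (intro Un_least Union_upper order_trans[OF p(7) Union_mono[OF N2(4)]]) auto
    then have "set (y # y' # z # p) \<subseteq> \<Union>(sym_diff M N)" by (simp add: insert_commute)
    ultimately show ?thesis
      using p(1-6) \<open>y \<noteq> y'\<close> yy' edges by (intro exI[of _ "y' # z # p"] conjI) simp_all
  qed
qed

text \<open>For a maximum matching M: the matching number of G - S is card M - 1, and the edges of M
  avoiding S form a maximum matching of G - S.\<close>

definition drops_matching_number :: "'a set set \<Rightarrow> 'a set set \<Rightarrow> 'a set \<Rightarrow> bool" where
  "drops_matching_number E M S \<longleftrightarrow> card M \<le> Suc (card (edges_avoiding S M))
     \<and> (\<forall>K. matching (edges_avoiding S E) K \<longrightarrow> card K < card M)"

lemma card_le_Suc_edges_avoiding: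
  assumes "finite M" "\<And>g. g \<in> M \<Longrightarrow> g \<inter> S \<noteq> {} \<Longrightarrow> g = t"
  shows "card M \<le> Suc (card (edges_avoiding S M))"
proof -
  have "M \<subseteq> insert t (edges_avoiding S M)" using assms(2) unfolding edges_avoiding_def by blast
  then have "card M \<le> card (insert t (edges_avoiding S M))"
    using assms(1) by (intro card_mono) (auto simp: edges_avoiding_def)
  also have "\<dots> \<le> Suc (card (edges_avoiding S M))"
    using assms(1) by (simp add: card_insert_if edges_avoiding_def)
  finally show ?thesis .
qed

lemma matching_edges_avoidingD:
  "matching (edges_avoiding S E) K \<Longrightarrow> matching E K \<and> \<Union>K \<inter> S = {}"
  unfolding matching_def edges_avoiding_def by blast

lemma essential_vertex_drops_matching_number:
  assumes simple: "simple_graph V E" and M: "max_matching E M"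
    and essential: "\<And>N. max_matching E N \<Longrightarrow> v \<in> \<Union>N"
  shows "drops_matching_number E M {v}"
  unfolding drops_matching_number_def
proof (intro conjI allI impI)
  have mM: "matching E M" and fin: "finite M"
    using M matching_finite[OF simple_graph_finite_edges[OF simple]]
    unfolding max_matching_def by auto
  obtain v' where vv': "{v, v'} \<in> M" using matching_mate[OF simple mM essential[OF M]] by blast
  show "card M \<le> Suc (card (edges_avoiding {v} M))"
    using card_le_Suc_edges_avoiding[OF fin, of "{v}" "{v, v'}"] matching_unique[OF mM _ vv', of _ v]
    by blast
  fix K assume "matching (edges_avoiding {v} E) K"
  then have K: "matching E K" "v \<notin> \<Union>K" using matching_edges_avoidingD by blast+
  then have "card K \<le> card M" using M unfolding max_matching_def by blast
  moreover have "card K \<noteq> card M"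
    using K essential[of K] M unfolding max_matching_def by auto
  ultimately show "card K < card M" by simp
qed

lemma weak_cover_step:
  assumes IH: "\<And>M'. max_matching (edges_avoiding S E) M' \<Longrightarrow>
      \<exists>Q. Q \<subseteq> V - S \<and> card Q \<le> card M' \<and> covers Q (edges_avoiding S E - M')"
    and M: "matching E M" and w: "w \<in> V" "\<And>g. g \<in> E - M \<Longrightarrow> g \<inter> S \<noteq> {} \<Longrightarrow> w \<in> g"
    and drops: "drops_matching_number E M S"
  shows "\<exists>Q. Q \<subseteq> V \<and> card Q \<le> card M \<and> covers Q (E - M)"
proof -
  have card_M: "card M \<le> Suc (card (edges_avoiding S M))"
    and smaller: "\<And>K. matching (edges_avoiding S E) K \<Longrightarrow> card K < card M"
    using drops unfolding drops_matching_number_def by auto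
  have M': "matching (edges_avoiding S E) (edges_avoiding S M)"
    using M unfolding matching_def edges_avoiding_def by auto
  then have "max_matching (edges_avoiding S E) (edges_avoiding S M)"
    using smaller card_M unfolding max_matching_def by fastforce
  then obtain Q where Q: "Q \<subseteq> V - S" "card Q \<le> card (edges_avoiding S M)"
      "covers Q (edges_avoiding S E - edges_avoiding S M)"
    using IH by blast
  have "card (insert w Q) \<le> Suc (card Q)" by (cases "finite Q") (simp_all add: card_insert_if)
  then have "card (insert w Q) \<le> card M" using Q(2) smaller[OF M'] by simp
  moreover have "covers (insert w Q) (E - M)"
    using Q(3) w(2) unfolding covers_def edges_avoiding_def by blast
  ultimately show ?thesis using Q(1) w(1) by blast
qed

context
  fixes V :: "'a set" and E :: "'a set set" and a b c :: 'a
  assumes simple: "simple_graph V E"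
    and triangle: "{a, b} \<in> E" "{a, c} \<in> E" "{b, c} \<in> E"
    and pendant: "\<And>u. {a, u} \<in> E \<Longrightarrow> u = b \<or> u = c" "\<And>u. {b, u} \<in> E \<Longrightarrow> u = a \<or> u = c"
begin

lemma pendant_triangle_edges:
  assumes g: "g \<in> E" "g \<inter> {a, b} \<noteq> {}"
  shows "g \<in> {{a, b}, {a, c}, {b, c}}"
proof -
  obtain x where x: "x \<in> g" "x \<in> {a, b}" using g(2) by blast
  then obtain u where "g = {x, u}" using simple_graph_edge_other[OF simple g(1)] by blast
  then show ?thesis using x g(1) pendant by (auto simp: insert_commute)
qed

lemma pendant_triangle_matching_edge:
  assumes M: "max_matching E M"
  obtains t where "t \<in> M" "t \<in> {{a, b}, {a, c}, {b, c}}" "\<And>g. g \<in> M \<Longrightarrow> g \<inter> {a, b} \<noteq> {} \<Longrightarrow> g = t"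
proof -
  have mM: "matching E M" using M unfolding max_matching_def by simp
  have "a \<in> \<Union>M \<or> b \<in> \<Union>M"
    using max_matching_edge_covered[OF M simple_graph_finite_edges[OF simple] triangle(1)] by blast
  then obtain t where t: "t \<in> M" "t \<inter> {a, b} \<noteq> {}" by blast
  have in_triangle: "g \<in> {{a, b}, {a, c}, {b, c}}" if "g \<in> M" "g \<inter> {a, b} \<noteq> {}" for g
    using pendant_triangle_edges that mM unfolding matching_def by blast
  have "g = t" if g: "g \<in> M" "g \<inter> {a, b} \<noteq> {}" for g
  proof -
    obtain x where "x \<in> g" "x \<in> t" using in_triangle[OF g] in_triangle[OF t] by auto
    then show ?thesis using matching_unique[OF mM g(1) t(1)] by blast
  qed
  then show ?thesis using that t(1) in_triangle[OF t] by blast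
qed

lemma pendant_triangle_drops_matching_number:
  assumes M: "max_matching E M"
  shows "drops_matching_number E M {a, b}"
  unfolding drops_matching_number_def
proof (intro conjI allI impI)
  have fin: "finite E" using simple_graph_finite_edges[OF simple] .
  have mM: "matching E M" using M unfolding max_matching_def by simp
  obtain t where "\<And>g. g \<in> M \<Longrightarrow> g \<inter> {a, b} \<noteq> {} \<Longrightarrow> g = t"
    using pendant_triangle_matching_edge[OF M] by blast
  then show "card M \<le> Suc (card (edges_avoiding {a, b} M))"
    using card_le_Suc_edges_avoiding[OF matching_finite[OF fin mM]] by blast
  fix K assume "matching (edges_avoiding {a, b} E) K"
  then have K: "matching E K" "a \<notin> \<Union>K" "b \<notin> \<Union>K" using matching_edges_avoidingD by blast+
  have "{a, b} \<notin> K" using K(2) by blast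
  then have "card (insert {a, b} K) = Suc (card K)" using matching_finite[OF fin K(1)] by simp
  moreover have "matching E (insert {a, b} K)" using matching_insert[OF K(1) triangle(1) K(2,3)] .
  ultimately show "card K < card M" using M unfolding max_matching_def by fastforce
qed

lemma pendant_triangle_cover_vertex:
  assumes M: "max_matching E M"
  obtains w where "w \<in> V" "\<And>g. g \<in> E - M \<Longrightarrow> g \<inter> {a, b} \<noteq> {} \<Longrightarrow> w \<in> g"
proof -
  obtain t where t: "t \<in> M" "t \<in> {{a, b}, {a, c}, {b, c}}"
    using pendant_triangle_matching_edge[OF M] by blast
  have V: "a \<in> V" "b \<in> V" "c \<in> V"
    using simple_graph_edgeD[OF simple triangle(1)] simple_graph_edgeD[OF simple triangle(2)]
    by auto
  have other: "g \<in> {{a, b}, {a, c}, {b, c}} - {t}" if "g \<in> E - M" "g \<inter> {a, b} \<noteq> {}" for g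
    using that pendant_triangle_edges[of g] t(1) by blast
  consider "t = {a, b}" | "t = {a, c}" | "t = {b, c}" using t(2) by blast
  then show ?thesis
  proof cases
    case 1
    then show ?thesis using that[of c] V(3) other by blast
  next
    case 2
    then show ?thesis using that[of b] V(2) other by blast
  next
    case 3
    then show ?thesis using that[of a] V(1) other by blast
  qed
qed

end

definition longest_path :: "'a set \<Rightarrow> 'a set set \<Rightarrow> 'a list \<Rightarrow> bool" where
  "longest_path V E P \<longleftrightarrow> distinct P \<and> set P \<subseteq> V \<and> walk E P \<and>
     (\<forall>P'. distinct P' \<and> set P' \<subseteq> V \<and> walk E P' \<longrightarrow> length P' \<le> length P)"

lemma longest_path_exists:
  assumes simple: "simple_graph V E" and "E \<noteq> {}"
  shows "\<exists>P. longest_path V E P \<and> 2 \<le> length P"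
proof -
  define is_path where "is_path P \<longleftrightarrow> distinct P \<and> set P \<subseteq> V \<and> walk E P" for P
  obtain e where "e \<in> E" using assms(2) by blast
  moreover obtain x y where "e = {x, y}"
    using bspec[OF conjunct2[OF simple[unfolded simple_graph_def]] \<open>e \<in> E\<close>] by blast
  ultimately have "{x, y} \<in> E" by simp
  then have edge: "is_path [x, y]" using simple_graph_edgeD[OF simple] unfolding is_path_def by auto
  have "length P < Suc (card V)" if "is_path P" for P
  proof -
    have "length P = card (set P)" using that unfolding is_path_def by (simp add: distinct_card)
    also have "\<dots> \<le> card V"
      using that simple unfolding is_path_def simple_graph_def by (simp add: card_mono)
    finally show ?thesis by simp
  qed
  then obtain P where "is_path P" "\<forall>P'. is_path P' \<longrightarrow> length P' \<le> length P"
    using ex_has_greatest_nat[of is_path "[x, y]" length] edge by metis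
  moreover have "2 \<le> length P" using calculation(2) edge by fastforce
  ultimately show ?thesis unfolding is_path_def longest_path_def by blast
qed

context
  fixes V :: "'a set" and E :: "'a set set"
  assumes simple: "simple_graph V E" and short_odd: "no_long_odd_cycles V E"
begin

text \<open>The alternating path from y either extends through x to an augmenting path, or ends in x
  and then closes an odd cycle, which must be a triangle.\<close>

lemma exposed_neighbour_mate_adjacent:
  assumes M: "max_matching E M" and x: "x \<notin> \<Union>M" and xy: "{x, y} \<in> E"
    and N: "max_matching E N" and y: "y \<notin> \<Union>N"
  shows "\<exists>y'. {y, y'} \<in> M \<and> {y', x} \<in> E"
proof -
  have fin: "finite E" using simple_graph_finite_edges[OF simple] .
  have "y \<in> \<Union>M" using max_matching_edge_covered[OF M fin xy x] .
  then obtain p where p: "p \<noteq> []" "even (length p)" "distinct (y # p)" "walk E (y # p)"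
      "last p \<notin> \<Union>M" "pairwise_matched M (y # p)"
    using alternating_path_to_exposed[OF simple M N _ y] by blast
  have "x \<in> set (y # p)"
  proof (rule ccontr)
    assume "x \<notin> set (y # p)"
    then show False
      using max_matching_no_augmenting_path[OF M fin, of x "y # p"] p x xy by simp
  qed
  then have last: "last (y # p) = x" using pairwise_matched_unmatched_last[OF p(6) _ x] by simp
  have "length (y # p) = 3"
  proof (rule odd_closed_walk_length[OF short_odd p(3) _ p(4)])
    show "set (y # p) \<subseteq> V" using walk_set[OF simple p(4)] p(1) by (simp add: Suc_le_eq)
    have "length p \<noteq> 0" using p(1) by simp
    then show "3 \<le> length (y # p)" using p(2) by (simp only: length_Cons) presburger
    show "{last (y # p), hd (y # p)} \<in> E" using last xy by simp
  qed (use p(2) in simp)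
  then obtain y' where "p = [y', x]" using last by (cases p rule: remdups_adj.cases) auto
  then show ?thesis using p(4,6) by auto
qed

lemma longest_path_neighbour_on_path:
  assumes "longest_path V E P" "P \<noteq> []" and edge: "{P ! 0, u} \<in> E"
  shows "u \<in> set P"
proof (rule ccontr)
  have P: "distinct P" "set P \<subseteq> V" "walk E P" "P \<noteq> []"
    and longest: "\<And>P'. distinct P' \<Longrightarrow> set P' \<subseteq> V \<Longrightarrow> walk E P' \<Longrightarrow> length P' \<le> length P"
    using assms unfolding longest_path_def by auto
  assume "u \<notin> set P"
  moreover have "u \<in> V" using simple_graph_edgeD[OF simple edge] by simp
  moreover have "walk E (u # P)"
    using P(3,4) edge by (simp add: walk_Cons hd_conv_nth insert_commute)
  ultimately have "length (u # P) \<le> length P" using longest[of "u # P"] P(1,2) by simp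
  then show False by simp
qed

text \<open>Such a chord closes a cycle of length i + 1 along P and one of length i using the triangle
  edge, and one of them is odd.\<close>

lemma triangle_path_no_far_chord:
  assumes P: "distinct P" "set P \<subseteq> V" "walk E P" and triangle: "{P ! 0, P ! 2} \<in> E"
    and i: "4 \<le> i" "i < length P"
  shows "{P ! 0, P ! i} \<notin> E"
proof
  assume chord: "{P ! 0, P ! i} \<in> E"
  have "odd (i - 0)"
    using path_chord_parity[OF short_odd P, of 0 i] i chord by (simp add: insert_commute)
  define P' where "P' = P ! 0 # drop 2 P"
  have "P \<noteq> []" using i by auto
  have "P ! 0 \<in> set (take 2 P)" using i by (simp add: in_set_conv_nth exI[of _ 0])
  then have "P ! 0 \<notin> set (drop 2 P)"
    using set_take_disj_set_drop_if_distinct[OF P(1), of 2 2] by blast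
  then have "distinct P'" using P(1) by (simp add: P'_def)
  moreover have "set P' \<subseteq> V"
    using P(2) nth_mem[of 0 P] \<open>P \<noteq> []\<close> by (auto simp: P'_def dest: in_set_dropD)
  moreover have "walk E P'" using P(3) triangle i
    by (simp add: P'_def walk_Cons walk_drop hd_drop_conv_nth)
  moreover have "P' ! (i - 1) = P ! i"
  proof -
    have "Suc (Suc (i - Suc (Suc 0))) = i" using i by simp
    then show ?thesis using i by (simp add: P'_def)
  qed
  ultimately have "odd (i - 1 - 0)"
    using path_chord_parity[OF short_odd, of P' 0 "i - 1"] i chord
    by (simp add: P'_def insert_commute)
  with \<open>odd (i - 0)\<close> show False using i by simp
qed

lemma longest_path_neighbour_index:
  assumes longest: "longest_path V E P" "P \<noteq> []" and triangle: "{P ! 0, P ! 2} \<in> E"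
    and u: "{P ! 0, u} \<in> E"
  obtains i where "i < length P" "P ! i = u" "0 < i" "i < 4"
proof -
  have "u \<in> set P" using longest_path_neighbour_on_path[OF longest u] .
  then obtain i where i: "i < length P" "P ! i = u" by (auto simp: in_set_conv_nth)
  moreover have "i \<noteq> 0" using i(2) simple_graph_edgeD[OF simple u] by metis
  moreover have "i < 4"
    using triangle_path_no_far_chord[OF _ _ _ triangle, of i] longest(1) i u
    unfolding longest_path_def by force
  ultimately show ?thesis using that by blast
qed

context
  assumes avoidable: "\<forall>v\<in>V. \<exists>N. max_matching E N \<and> v \<notin> \<Union>N"
begin

text \<open>Exchanging the diagonal for {v0, v1} or {v0, v3} exposes v3 or v1, so the N-mate u of v2 is
  adjacent to both, and v0 v1 u v2 v3 is a 5-cycle.\<close>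

lemma exposed_square_with_matched_diagonal:
  assumes N: "max_matching E N" and v0: "v0 \<notin> \<Union>N" and diag: "{v1, v3} \<in> N"
    and dist: "distinct [v0, v1, v2, v3]" and square: "walk E [v0, v1, v2, v3]" "{v3, v0} \<in> E"
  shows False
proof -
  have fin: "finite E" using simple_graph_finite_edges[OF simple] .
  have mN: "matching E N" using N unfolding max_matching_def by simp
  have "v2 \<in> \<Union>N"
  proof (rule ccontr)
    assume "v2 \<notin> \<Union>N"
    moreover have "{v1, v3} \<in> E" using diag mN unfolding matching_def by auto
    ultimately show False
      using max_matching_no_augmenting_path[OF N fin, of v0 "[v1, v3, v2]"] v0 diag dist square
      by (auto simp: insert_commute)
  qed
  then obtain u where v2u: "{v2, u} \<in> N" and "v2 \<noteq> u" using matching_mate[OF simple mN] by blast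
  have "u \<noteq> v0" using v2u v0 by blast
  have "{v2, u} \<noteq> {v1, v3}" using dist by (auto simp: doubleton_eq_iff)
  then have "u \<notin> {v1, v3}" using matching_unique[OF mN v2u diag, of u] by auto
  obtain N2 where N2: "max_matching E N2" "v2 \<notin> \<Union>N2"
    using avoidable walk_set[OF simple square(1)] by auto
  have adjacent: "{u, b} \<in> E"
    if ab: "{a, b} \<in> N" "{v0, a} \<in> E" "{b, v2} \<in> E" "a \<noteq> b" "v2 \<notin> {a, b}" for a b
  proof -
    define N1 where "N1 = insert {v0, a} (N - {{a, b}})"
    have N1: "max_matching E N1" unfolding N1_def using max_matching_swap[OF N fin ab(1,2) v0] .
    have "b \<notin> \<Union>N1" unfolding N1_def using swap_unmatched[OF mN ab(1) v0 ab(4)] .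
    then obtain y where y: "{v2, y} \<in> N1" "{y, b} \<in> E"
      using exposed_neighbour_mate_adjacent[OF N1 _ ab(3) N2] by blast
    have "{v2, u} \<in> N1" using v2u ab(5) unfolding N1_def by auto
    then have "{v2, y} = {v2, u}"
      using matching_unique[OF _ y(1), of E _ v2] N1 unfolding max_matching_def by blast
    then show ?thesis using y(2) by (auto simp: doubleton_eq_iff)
  qed
  have "{u, v3} \<in> E" using adjacent[OF diag] dist square by (auto simp: insert_commute)
  moreover have "{u, v1} \<in> E"
    using adjacent[of v3 v1] diag dist square by (auto simp: insert_commute)
  moreover have "{v2, u} \<in> E" using v2u mN unfolding matching_def by auto
  ultimately have "length [v0, v1, u, v2, v3] = 3"
    using odd_closed_walk_length[OF short_odd, of "[v0, v1, u, v2, v3]"] dist square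
      \<open>u \<noteq> v0\<close> \<open>u \<notin> {v1, v3}\<close> \<open>v2 \<noteq> u\<close>
      walk_set[OF simple square(1)] walk_set[OF simple, of "[u, v2]"]
    by (auto simp: insert_commute)
  then show False by simp
qed

lemma longest_path_second_vertex_mate:
  assumes longest: "longest_path V E P" "2 \<le> length P"
    and N: "max_matching E N" and v0: "P ! 0 \<notin> \<Union>N"
  shows "3 \<le> length P \<and> {P ! 1, P ! 2} \<in> N \<and> {P ! 0, P ! 2} \<in> E"
proof -
  have P: "distinct P" "set P \<subseteq> V" "walk E P" "2 \<le> length P"
    using longest unfolding longest_path_def by auto
  have mN: "matching E N" using N unfolding max_matching_def by simp
  have step: "{P ! k, P ! Suc k} \<in> E" if "Suc k < length P" for k
    using P(3) that by (simp add: walk_iff_nth)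
  have e01: "{P ! 0, P ! 1} \<in> E" using step[of 0] P(4) by simp
  have "P ! 1 \<in> V" using P(2,4) nth_mem[of 1 P] by auto
  then obtain N' where N': "max_matching E N'" "P ! 1 \<notin> \<Union>N'" using avoidable by blast
  obtain u where u: "{P ! 1, u} \<in> N" "{u, P ! 0} \<in> E"
    using exposed_neighbour_mate_adjacent[OF N v0 e01 N'] by blast
  have uE: "{P ! 1, u} \<in> E" using u(1) mN unfolding matching_def by auto
  have "P \<noteq> []" using P(4) by auto
  then have "u \<in> set P"
    using longest_path_neighbour_on_path[OF longest(1), of u] u(2) by (simp add: insert_commute)
  then obtain j where j: "j < length P" "P ! j = u" by (auto simp: in_set_conv_nth)
  have "j \<noteq> 0" using j(2) u(1) v0 by auto
  moreover have "j \<noteq> 1" using j simple_graph_edgeD[OF simple uE] by auto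
  moreover have "j \<noteq> 3"
  proof
    assume "j = 3"
    then have "4 \<le> length P" using j(1) by simp
    then have "\<exists>a b c d r. P = a # b # c # d # r" by (auto simp: Suc_le_length_iff eval_nat_numeral)
    then obtain a b c d r where P4: "P = a # b # c # d # r" by blast
    then have "distinct [a, b, c, d]" "walk E [a, b, c, d]" using P(1,3) by auto
    then show False
      using exposed_square_with_matched_diagonal[OF N, of a b d c] v0 u j \<open>j = 3\<close> P4
      by (simp add: insert_commute)
  qed
  moreover have "\<not> 4 \<le> j"
  proof
    assume "4 \<le> j"
    have "{P ! j, P ! 0} \<in> E" "{P ! j, P ! 1} \<in> E"
      using j(2) u(2) uE by (simp_all add: insert_commute)
    then have "odd (j - 0)" "odd (j - 1)"
      using path_chord_parity[OF short_odd P(1-3) _ j(1), of 0]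
        path_chord_parity[OF short_odd P(1-3) _ j(1), of 1]
        \<open>4 \<le> j\<close> by simp_all
    then show False using \<open>4 \<le> j\<close> by simp
  qed
  ultimately have "j = 2" by simp
  then show ?thesis using j u uE by (auto simp: insert_commute)
qed

lemma longest_path_start_in_triangle:
  assumes longest: "longest_path V E P" "2 \<le> length P"
  shows "3 \<le> length P \<and> {P ! 0, P ! 2} \<in> E \<and> (\<forall>u. {P ! 0, u} \<in> E \<longrightarrow> u = P ! 1 \<or> u = P ! 2)"
proof -
  have P: "distinct P" "set P \<subseteq> V" using longest unfolding longest_path_def by auto
  have "P \<noteq> []" using longest(2) by auto
  then have "P ! 0 \<in> V" using P(2) nth_mem[of 0 P] by auto
  then obtain N where N: "max_matching E N" "P ! 0 \<notin> \<Union>N" using avoidable by blast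
  have mN: "matching E N" using N(1) unfolding max_matching_def by simp
  have tri: "3 \<le> length P" "{P ! 1, P ! 2} \<in> N" "{P ! 0, P ! 2} \<in> E"
    using longest_path_second_vertex_mate[OF longest N] by auto
  note index = longest_path_neighbour_index[OF longest(1) \<open>P \<noteq> []\<close> tri(3)]
  have "u = P ! 1 \<or> u = P ! 2" if u: "{P ! 0, u} \<in> E" for u
  proof -
    obtain i where i: "i < length P" "P ! i = u" "0 < i" "i < 4" using index[OF u] by blast
    have "i \<noteq> 3"
    proof
      assume "i = 3"
      have "u \<in> V" using simple_graph_edgeD[OF simple u] by simp
      then obtain N' where "max_matching E N'" "u \<notin> \<Union>N'" using avoidable by blast
      then obtain u' where u': "{u, u'} \<in> N" "{u', P ! 0} \<in> E"
        using exposed_neighbour_mate_adjacent[OF N u] by blast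
      then obtain l where l: "l < length P" "P ! l = u'" "0 < l" "l < 4"
        using index[of u'] by (auto simp: insert_commute)
      have "l \<noteq> 3" using l(2) i(2) \<open>i = 3\<close> u'(1) mN simple_graph_edgeD[OF simple, of u u']
        unfolding matching_def by auto
      moreover have "u' \<notin> {P ! 1, P ! 2}"
      proof
        assume "u' \<in> {P ! 1, P ! 2}"
        then have "{u, u'} = {P ! 1, P ! 2}"
          using matching_unique[OF mN u'(1) tri(2), of u'] by auto
        then show False using P(1) i \<open>i = 3\<close> by (auto simp: doubleton_eq_iff nth_eq_iff_index_eq)
      qed
      ultimately show False using l by (auto simp: less_Suc_eq numeral_eq_Suc)
    qed
    then show ?thesis using i by (auto simp: less_Suc_eq numeral_eq_Suc)
  qed
  then show ?thesis using tri by blast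
qed

lemma exists_pendant_triangle:
  assumes "E \<noteq> {}"
  shows "\<exists>a b c. {a, b} \<in> E \<and> {a, c} \<in> E \<and> {b, c} \<in> E
    \<and> (\<forall>u. {a, u} \<in> E \<longrightarrow> u = b \<or> u = c) \<and> (\<forall>u. {b, u} \<in> E \<longrightarrow> u = a \<or> u = c)"
proof -
  obtain P where P: "longest_path V E P" "2 \<le> length P"
    using longest_path_exists[OF simple assms] by blast
  note start = longest_path_start_in_triangle
  have "3 \<le> length P" using start[OF P] by blast
  then have "\<exists>a b c r. P = a # b # c # r" by (auto simp: Suc_le_length_iff eval_nat_numeral)
  then obtain a b c r where abc: "P = a # b # c # r" by blast
  have a: "{a, c} \<in> E" "\<forall>u. {a, u} \<in> E \<longrightarrow> u = b \<or> u = c" using start[OF P] abc by auto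
  have path: "{a, b} \<in> E" "{b, c} \<in> E" using P(1) abc unfolding longest_path_def by auto
  have "longest_path V E (b # a # c # r)"
    using P(1) a(1) abc unfolding longest_path_def by (auto simp: insert_commute)
  then have "\<forall>u. {b, u} \<in> E \<longrightarrow> u = a \<or> u = c" using start[of "b # a # c # r"] by simp
  then show ?thesis using a path by blast
qed

end

end

lemma max_matching_weak_cover:
  assumes "simple_graph V E" "no_long_odd_cycles V E" "max_matching E M"
  shows "\<exists>Q. Q \<subseteq> V \<and> card Q \<le> card M \<and> covers Q (E - M)"
  using assms
proof (induction "card V" arbitrary: V E M rule: less_induct)
  case less
  have mM: "matching E M" using less.prems(3) unfolding max_matching_def by simp
  have IH: "\<exists>Q. Q \<subseteq> V - S \<and> card Q \<le> card M' \<and> covers Q (edges_avoiding S E - M')"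
    if "S \<subseteq> V" "S \<noteq> {}" "max_matching (edges_avoiding S E) M'" for S M'
  proof (rule less.hyps)
    have "V - S \<subset> V" using that(1,2) by blast
    then show "card (V - S) < card V"
      using less.prems(1) unfolding simple_graph_def by (simp add: psubset_card_mono)
  qed (use that(3) simple_graph_edges_avoiding[OF less.prems(1)]
        no_long_odd_cycles_edges_avoiding[OF less.prems(2)] in auto)
  consider (no_edges) "E = {}"
    | (essential) v where "v \<in> V" "\<And>N. max_matching E N \<Longrightarrow> v \<in> \<Union>N"
    | (avoidable) "E \<noteq> {}" "\<forall>v\<in>V. \<exists>N. max_matching E N \<and> v \<notin> \<Union>N"
    by blast
  then show ?case
  proof cases
    case no_edges
    then show ?thesis unfolding covers_def by auto
  next
    case essential
    have "{v} \<subseteq> V" "{v} \<noteq> {}" using essential(1) by auto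
    show ?thesis
      by (rule weak_cover_step[OF IH[OF \<open>{v} \<subseteq> V\<close> \<open>{v} \<noteq> {}\<close>] mM essential(1) _
            essential_vertex_drops_matching_number[OF less.prems(1,3) essential(2)]]) auto
  next
    case avoidable
    then obtain a b c where abc: "{a, b} \<in> E" "{a, c} \<in> E" "{b, c} \<in> E"
      "\<And>u. {a, u} \<in> E \<Longrightarrow> u = b \<or> u = c" "\<And>u. {b, u} \<in> E \<Longrightarrow> u = a \<or> u = c"
      using exists_pendant_triangle[OF less.prems(1,2) avoidable(2,1)] by blast
    obtain w where w: "w \<in> V" "\<And>g. g \<in> E - M \<Longrightarrow> g \<inter> {a, b} \<noteq> {} \<Longrightarrow> w \<in> g"
      using pendant_triangle_cover_vertex[OF less.prems(1) abc less.prems(3)] by blast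
    have S: "{a, b} \<subseteq> V" "{a, b} \<noteq> {}" using simple_graph_edgeD[OF less.prems(1) abc(1)] by auto
    show ?thesis
      by (rule weak_cover_step[OF IH[OF S] mM w
            pendant_triangle_drops_matching_number[OF less.prems(1) abc less.prems(3)]])
  qed
qed

theorem proposition4p8:
  fixes V :: "'a set" and E :: "'a set set"
  assumes "simple_graph V E"
    and "\<not> (\<exists>vs. is_cycle V E vs \<and> odd (length vs) \<and> length vs > 3)"
  shows "weak_KE V E"
proof -
  obtain M where M: "max_matching E M"
    using max_matching_exists[OF simple_graph_finite_edges[OF assms(1)]] by blast
  moreover have "no_long_odd_cycles V E" using assms(2) unfolding no_long_odd_cycles_def .
  ultimately obtain Q where "Q \<subseteq> V" "card Q \<le> card M" "covers Q (E - M)"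
    using max_matching_weak_cover[OF assms(1)] by blast
  then show ?thesis using M unfolding weak_KE_def max_matching_def by blast
qed

end
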